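(* Let $r,I_1,I_2$ be positive integers with $r\le I_1I_2$. Let $\Psi=(\Gamma_1,\dots,\Gamma_r)$ and $\Psi'=(\Gamma'_1,\dots,\Gamma'_r)$ be tripartite states of format $r\times I_1\times I_2$ such that $\Gamma_1,\dots,\Gamma_r$ are linearly independent and $\Gamma'_1,\dots,\Gamma'_r$ are linearly independent. Choose complementary states $\overline{\Psi}=(\Gamma_{r+1},\dots,\Gamma_{I_1I_2})$ and $\overline{\Psi}'=(\Gamma'_{r+1},\dots,\Gamma'_{I_1I_2})$. Form the invertible $I_1I_2\times I_1I_2$ matrices $U=(\mathcal V(\Gamma_1),\dots,\mathcal V(\Gamma_{I_1I_2}))$ and $U'=(\mathcal V(\Gamma'_1),\dots,\mathcal V(\Gamma'_{I_1I_2}))$. Then $\Psi'$ and $\Psi$ are SLOCC equivalent if and only if there exist an invertible $P\in\mathbb C^{r\times r}$, an invertible $\overline P\in\mathbb C^{(I_1I_2-r)\times(I_1I_2-r)}$ and an arbitrary $Y\in\mathbb C^{r\times(I_1I_2-r)}$ such that, with $$\widetilde P=\begin{pmatrix}P&Y\\0&\overline P\end{pmatrix},$$ we have $$\operatorname{rank}\,\mathcal R\big(U\widetilde P\,U'^{-1}\big)=1 .$$ Equivalently, $U\widetilde P\,U'^{-1}$ is a Kronecker product $C\otimes B$ with $C\in\mathbb C^{I_2\times I_2}$ and $B\in\mathbb C^{I_1\times I_1}$. When $r=I_1I_2$, there are no complementary states and $\widetilde P=P$.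
   Context: **Tripartite states as tuples.** A tripartite (not necessarily normalized) state of format $r\times I_1\times I_2$ is written as a tuple $\Psi=(\Gamma_1,\dots,\Gamma_r)$ with $\Gamma_k\in\mathbb C^{I_1\times I_2}$. It stands for the vector $$\sum_{k=1}^r\sum_{i_1,i_2}(\Gamma_k)_{i_1i_2}\,|k\rangle|i_1\rangle|i_2\rangle\in\mathbb C^r\otimes\mathbb C^{I_1}\otimes\mathbb C^{I_2}.$$ **SLOCC equivalence.** Two states $|\Psi'\rangle,|\Psi\rangle$ of $N$ parties are SLOCC equivalent if $|\Psi'\rangle=A_1\otimes\cdots\otimes A_N|\Psi\rangle$ for some invertible matrices $A_j$. For tuples this reads: there are invertible $P_0\in\mathbb C^{r\times r}$, $A_1\in\mathbb C^{I_1\times I_1}$ and $A_2\in\mathbb C^{I_2\times I_2}$ with $$\Gamma'_k=\sum_l (P_0)_{kl}\,A_1\Gamma_lA_2^{\mathrm T}\quad\text{for all }k.$$ **Vectorization.** For $\Gamma\in\mathbb C^{I_1\times I_2}$, $\mathcal V(\Gamma)\in\mathbb C^{I_1I_2}$ is the column-stacking vectorization $(\Gamma_{11},\dots,\Gamma_{I_11},\Gamma_{12},\dots,\Gamma_{I_1I_2})^{\mathrm T}$. It satisfies $\mathcal V(B\Gamma C^{\mathrm T})=(C\otimes B)\mathcal V(\Gamma)$. **Complementary state.** If $\Gamma_1,\dots,\Gamma_r$ are linearly independent, a complementary state of $(\Gamma_1,\dots,\Gamma_r)$ is any tuple $(\Gamma_{r+1},\dots,\Gamma_{I_1I_2})$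 of matrices in $\mathbb C^{I_1\times I_2}$ such that $\Gamma_1,\dots,\Gamma_{I_1I_2}$ form a basis of $\mathbb C^{I_1\times I_2}$. **Realignment.** Partition an $I_1I_2\times I_1I_2$ matrix $M$ into an $I_2\times I_2$ array of blocks $M_{ij}\in\mathbb C^{I_1\times I_1}$. Then $$\mathcal R(M)=\big(\mathcal V(M_{11}),\dots,\mathcal V(M_{I_21}),\mathcal V(M_{12}),\dots,\mathcal V(M_{I_2I_2})\big)^{\mathrm T}\in\mathbb C^{I_2^2\times I_1^2}.$$ With this convention, $\mathcal R(M)$ has rank $1$ exactly when $M=C\otimes B$ with $C\in\mathbb C^{I_2\times I_2}$, $B\in\mathbb C^{I_1\times I_1}$ and $M\neq 0$. *)

theory Defs
  imports "Jordan_Normal_Form.DL_Rank"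
begin

text \<open>Conventions: all indices are 0-based. A tuple of matrices
  (Gamma_1,...,Gamma_m) is a function G :: nat => complex mat, where Gamma_(k+1) is G k.
  A state (Gamma_1..Gamma_r) together with a complementary state
  (Gamma_(r+1)..Gamma_(I1 I2)) is thus one function G on indices below I1*I2.\<close>

definition vecz :: "'a mat \<Rightarrow> 'a vec" where
  "vecz A = vec (dim_row A * dim_col A) (\<lambda>k. A $$ (k mod dim_row A, k div dim_row A))"

definition lin_indep_mats :: "nat \<Rightarrow> nat \<Rightarrow> (nat \<Rightarrow> complex mat) \<Rightarrow> nat \<Rightarrow> bool" where
  "lin_indep_mats I1 I2 G m \<longleftrightarrow>
     (\<forall>c :: nat \<Rightarrow> complex.
        (\<forall>i<I1. \<forall>j<I2. (\<Sum>k<m. c k * G k $$ (i,j)) = 0) \<longrightarrow> (\<forall>k<m. c k = 0))"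

definition spanning_mats :: "nat \<Rightarrow> nat \<Rightarrow> (nat \<Rightarrow> complex mat) \<Rightarrow> nat \<Rightarrow> bool" where
  "spanning_mats I1 I2 G m \<longleftrightarrow>
     (\<forall>M \<in> carrier_mat I1 I2. \<exists>c :: nat \<Rightarrow> complex.
        \<forall>i<I1. \<forall>j<I2. M $$ (i,j) = (\<Sum>k<m. c k * G k $$ (i,j)))"

definition complementary_state :: "nat \<Rightarrow> nat \<Rightarrow> nat \<Rightarrow> (nat \<Rightarrow> complex mat) \<Rightarrow> bool" where
  "complementary_state r I1 I2 G \<longleftrightarrow>
     (\<forall>k<I1*I2. G k \<in> carrier_mat I1 I2) \<and>
     lin_indep_mats I1 I2 G (I1*I2) \<and> spanning_mats I1 I2 G (I1*I2)"

definition slocc_equiv :: "nat \<Rightarrow> nat \<Rightarrow> nat \<Rightarrow> (nat \<Rightarrow> complex mat) \<Rightarrow> (nat \<Rightarrow> complex mat) \<Rightarrow> bool" where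
  "slocc_equiv r I1 I2 G' G \<longleftrightarrow>
     (\<exists>P0 A1 A2. P0 \<in> carrier_mat r r \<and> invertible_mat P0 \<and>
        A1 \<in> carrier_mat I1 I1 \<and> invertible_mat A1 \<and>
        A2 \<in> carrier_mat I2 I2 \<and> invertible_mat A2 \<and>
        (\<forall>k<r. G' k = mat I1 I2 (\<lambda>(i,j). \<Sum>l<r. P0 $$ (k,l) * (A1 * G l * transpose_mat A2) $$ (i,j))))"

definition state_mat :: "nat \<Rightarrow> nat \<Rightarrow> (nat \<Rightarrow> complex mat) \<Rightarrow> complex mat" where
  "state_mat I1 I2 G = mat (I1*I2) (I1*I2) (\<lambda>(i,j). vecz (G j) $ i)"

definition mat_inv :: "'a :: semiring_1 mat \<Rightarrow> 'a mat" where
  "mat_inv A = (SOME B. inverts_mat A B \<and> inverts_mat B A)"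

text \<open>Realignment of an (I1 I2) x (I1 I2) matrix, partitioned into I2 x I2 blocks of
  size I1 x I1: row (i + I2 j) is V(M_ij) (0-based block indices).\<close>
definition realign :: "nat \<Rightarrow> nat \<Rightarrow> 'a mat \<Rightarrow> 'a mat" where
  "realign I1 I2 M = mat (I2*I2) (I1*I1)
     (\<lambda>(p,q). M $$ ((p mod I2) * I1 + q mod I1, (p div I2) * I1 + q div I1))"

definition kron :: "'a :: times mat \<Rightarrow> 'a mat \<Rightarrow> 'a mat" where
  "kron C B = mat (dim_row C * dim_row B) (dim_col C * dim_col B)
     (\<lambda>(i,j). C $$ (i div dim_row B, j div dim_col B) * B $$ (i mod dim_row B, j mod dim_col B))"

end

theory Submission
  imports Defs "Jordan_Normal_Form.DL_Rank_Submatrix"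
begin

text \<open>Vectorization turns the local operation \<open>X \<mapsto> B X C\<^sup>T\<close> into multiplication by
  \<open>C \<otimes> B\<close>, and column \<open>k\<close> of \<open>U\<close> is \<open>\<V>(\<Gamma>\<^sub>k)\<close>. Hence \<open>U T U'\<^sup>-\<^sup>1 = C \<otimes> B\<close> says
  exactly that \<open>B \<Gamma>'\<^sub>k C\<^sup>T = \<Sum>\<^sub>l T\<^sub>l\<^sub>k \<Gamma>\<^sub>l\<close> for every \<open>k\<close>. For \<open>k \<le> r\<close> the block triangular
  shape of \<open>T\<close> makes the right-hand side a combination of \<open>\<Gamma>\<^sub>1, \<dots>, \<Gamma>\<^sub>r\<close> with coefficients
  from \<open>P\<close>, which is SLOCC equivalence with \<open>P\<^sub>0 = P\<^sup>T\<close>, \<open>A\<^sub>1 = B\<^sup>-\<^sup>1\<close>, \<open>A\<^sub>2 = C\<^sup>-\<^sup>1\<close>;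
  conversely, given an SLOCC equivalence, \<open>T := U\<^sup>-\<^sup>1 (C \<otimes> B) U'\<close> has this shape.
  Realignment turns \<open>C \<otimes> B\<close> into the rank-one matrix \<open>\<V>(C) \<V>(B)\<^sup>T\<close>, and a nonzero matrix
  is a Kronecker product iff its realignment has rank one; here \<open>U T U'\<^sup>-\<^sup>1\<close> is invertible,
  hence nonzero.\<close>

lemma mixed_radix_less:
  fixes a b m n :: nat
  assumes "a < m" and "b < n"
  shows "a + m * b < m * n"
proof -
  have "a + m * b < m * Suc b" using assms(1) by simp
  also have "\<dots> \<le> m * n" using assms(2) by (intro mult_le_mono2) simp
  finally show ?thesis .
qed

lemma mod_div_less_of_less_mult:
  fixes i m n :: nat
  assumes "i < m * n"
  shows "i mod m < m" and "i div m < n"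
proof -
  have "0 < m" using assms by (cases m) auto
  then show "i mod m < m" and "i div m < n"
    using assms by (auto simp: less_mult_imp_div_less mult.commute)
qed

lemma sum_lessThan_mult_nat:
  "(\<Sum>i<(m :: nat) * k. f i) = (\<Sum>c<m. \<Sum>d<k. f (d + k * c) :: 'a :: comm_monoid_add)"
proof -
  have "(\<Sum>i<m * k. f i) = (\<Sum>c<m. sum f {c * k..<c * k + k})" by (rule sum.nat_group[symmetric])
  also have "\<dots> = (\<Sum>c<m. \<Sum>d<k. f (d + k * c))"
  proof (rule sum.cong[OF refl])
    fix c
    have "sum f {0 + c * k..<k + c * k} = (\<Sum>d = 0..<k. f (d + c * k))"
      by (rule sum.shift_bounds_nat_ivl)
    then show "sum f {c * k..<c * k + k} = (\<Sum>d<k. f (d + k * c))"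
      by (simp add: add.commute mult.commute atLeast0LessThan)
  qed
  finally show ?thesis .
qed

lemma inverts_mat_mat_inv:
  assumes "invertible_mat A"
  shows "inverts_mat A (mat_inv A)" and "inverts_mat (mat_inv A) A"
proof -
  have "\<exists>B. inverts_mat A B \<and> inverts_mat B A" using assms unfolding invertible_mat_def by auto
  then have "inverts_mat A (mat_inv A) \<and> inverts_mat (mat_inv A) A"
    unfolding mat_inv_def by (rule someI_ex)
  then show "inverts_mat A (mat_inv A)" and "inverts_mat (mat_inv A) A" by auto
qed

lemma mat_inv_carrier:
  assumes A: "A \<in> carrier_mat n n" and "invertible_mat A"
  shows "mat_inv A \<in> carrier_mat n n"
proof -
  have AB: "A * mat_inv A = 1\<^sub>m n" and BA: "mat_inv A * A = 1\<^sub>m (dim_row (mat_inv A))"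
    using inverts_mat_mat_inv[OF assms(2)] A unfolding inverts_mat_def by auto
  have "dim_row (mat_inv A) = n" using BA A
    by (metis carrier_matD(2) index_mult_mat(3) index_one_mat(3))
  moreover have "dim_col (mat_inv A) = n" using AB
    by (metis index_mult_mat(3) index_one_mat(3))
  ultimately show ?thesis by auto
qed

lemma mat_inv_right:
  assumes "A \<in> carrier_mat n n" and "invertible_mat A"
  shows "A * mat_inv A = 1\<^sub>m n"
  using inverts_mat_mat_inv(1)[OF assms(2)] assms(1) unfolding inverts_mat_def by auto

lemma mat_inv_left:
  assumes "A \<in> carrier_mat n n" and "invertible_mat A"
  shows "mat_inv A * A = 1\<^sub>m n"
  using inverts_mat_mat_inv(2)[OF assms(2)] mat_inv_carrier[OF assms] unfolding inverts_mat_def by auto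

lemma invertible_mat_iff_det:
  fixes A :: "'a :: field mat"
  assumes A: "A \<in> carrier_mat n n"
  shows "invertible_mat A \<longleftrightarrow> det A \<noteq> 0"
proof
  assume "invertible_mat A"
  then have "det A * det (mat_inv A) = 1"
    using det_mult[OF A mat_inv_carrier[OF A]] mat_inv_right[OF A] by simp
  then show "det A \<noteq> 0" by auto
next
  assume "det A \<noteq> 0"
  then obtain B where "B \<in> carrier_mat n n" "A * B = 1\<^sub>m n" "B * A = 1\<^sub>m n"
    using det_non_zero_imp_unit[OF A, of undefined] unfolding Units_def ring_mat_def by auto
  then show "invertible_mat A"
    using A unfolding invertible_mat_def inverts_mat_def by auto
qed

lemma invertible_mat_mat_inv:
  assumes "A \<in> carrier_mat n n" and "invertible_mat A"
  shows "invertible_mat (mat_inv A)"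
  using inverts_mat_mat_inv[OF assms(2)] mat_inv_carrier[OF assms]
  unfolding invertible_mat_def by auto

lemma invertible_mat_transpose:
  fixes A :: "'a :: field mat"
  assumes A: "A \<in> carrier_mat n n" and "invertible_mat A"
  shows "invertible_mat (transpose_mat A)"
  using assms invertible_mat_iff_det[OF A] invertible_mat_iff_det[of "transpose_mat A" n]
  by (simp add: det_transpose)

lemma inverse_sandwich_cancel:
  fixes B B' C C' X :: "'a :: comm_ring_1 mat"
  assumes B: "B \<in> carrier_mat m m" and B': "B' \<in> carrier_mat m m" and "B' * B = 1\<^sub>m m"
    and C: "C \<in> carrier_mat n n" and C': "C' \<in> carrier_mat n n" and "C' * C = 1\<^sub>m n"
    and X: "X \<in> carrier_mat m n"
  shows "B' * (B * X * transpose_mat C) * transpose_mat C' = X"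
proof -
  have CC': "transpose_mat C * transpose_mat C' = 1\<^sub>m n"
    using transpose_mult[OF C' C] assms(6) by simp
  have "B' * (B * X * transpose_mat C) * transpose_mat C'
      = (B' * B) * X * (transpose_mat C * transpose_mat C')"
    using B B' C C' X by (simp add: assoc_mult_mat[of _ m m _ n _ n])
  then show ?thesis using assms(3) CC' X by simp
qed

lemma mat_inv_conjugate_cancel:
  fixes U V K :: "'a :: semiring_1 mat"
  assumes U: "U \<in> carrier_mat n n" "invertible_mat U" and V: "V \<in> carrier_mat n n" "invertible_mat V"
    and K: "K \<in> carrier_mat n n"
  shows "U * (mat_inv U * (K * V)) * mat_inv V = K"
proof -
  have KV: "K * V \<in> carrier_mat n n" using K V by auto
  have "U * (mat_inv U * (K * V)) = (U * mat_inv U) * (K * V)"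
    using assoc_mult_mat[OF U(1) mat_inv_carrier[OF U] KV] by simp
  also have "\<dots> = K * V" using mat_inv_right[OF U] left_mult_one_mat[OF KV] by simp
  finally have "U * (mat_inv U * (K * V)) = K * V" .
  then show ?thesis using assoc_mult_mat[OF K V(1) mat_inv_carrier[OF V]] mat_inv_right[OF V] K by simp
qed

subsection \<open>Vectorization\<close>

lemma vecz_carrier: "A \<in> carrier_mat m n \<Longrightarrow> vecz A \<in> carrier_vec (m * n)"
  unfolding vecz_def carrier_vec_def by auto

lemma dim_vecz: "A \<in> carrier_mat m n \<Longrightarrow> dim_vec (vecz A) = m * n"
  unfolding vecz_def by auto

lemma vecz_index: "A \<in> carrier_mat m n \<Longrightarrow> i < m * n \<Longrightarrow> vecz A $ i = A $$ (i mod m, i div m)"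
  unfolding vecz_def by auto

lemma vecz_inject:
  assumes A: "A \<in> carrier_mat m n" and B: "B \<in> carrier_mat m n"
  shows "vecz A = vecz B \<longleftrightarrow> A = B"
proof
  assume eq: "vecz A = vecz B"
  show "A = B"
  proof (rule eq_matI)
    fix a b assume "a < dim_row B" "b < dim_col B"
    then have a: "a < m" and ab: "a + m * b < m * n" using B mixed_radix_less by auto
    have "vecz A $ (a + m * b) = vecz B $ (a + m * b)" using eq by simp
    then show "A $$ (a, b) = B $$ (a, b)" using vecz_index[OF A ab] vecz_index[OF B ab] a by simp
  qed (use A B in auto)
qed simp

lemma vecz_zero: "vecz (0\<^sub>m m n) = 0\<^sub>v (m * n)"
  by (intro eq_vecI) (auto simp: vecz_def mod_div_less_of_less_mult)

lemma vecz_eq_zero_iff: "A \<in> carrier_mat m n \<Longrightarrow> vecz A = 0\<^sub>v (m * n) \<longleftrightarrow> A = 0\<^sub>m m n"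
  using vecz_inject[of A m n "0\<^sub>m m n"] by (simp add: vecz_zero)

lemma vecz_unvec:
  assumes v: "v \<in> carrier_vec (m * n)"
  shows "vecz (mat m n (\<lambda>(a, b). v $ (a + m * b))) = v"
proof (rule eq_vecI)
  fix i assume "i < dim_vec v"
  then have i: "i < m * n" using v by simp
  then show "vecz (mat m n (\<lambda>(a, b). v $ (a + m * b))) $ i = v $ i"
    using vecz_index[of "mat m n (\<lambda>(a, b). v $ (a + m * b))" m n i] mod_div_less_of_less_mult[OF i]
    by (simp add: mult.commute)
qed (use v in \<open>simp add: vecz_def\<close>)

definition mat_lincomb :: "nat \<Rightarrow> nat \<Rightarrow> (nat \<Rightarrow> 'a :: comm_semiring_1) \<Rightarrow> (nat \<Rightarrow> 'a mat) \<Rightarrow> nat \<Rightarrow> 'a mat"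
  where "mat_lincomb nr nc c X m = mat nr nc (\<lambda>(i, j). \<Sum>l<m. c l * X l $$ (i, j))"

lemma mat_lincomb_carrier: "mat_lincomb nr nc c X m \<in> carrier_mat nr nc"
  unfolding mat_lincomb_def by auto

lemma mat_lincomb_cong:
  "(\<And>l. l < m \<Longrightarrow> c l = c' l) \<Longrightarrow> (\<And>l. l < m \<Longrightarrow> X l = X' l) \<Longrightarrow>
   mat_lincomb nr nc c X m = mat_lincomb nr nc c' X' m"
  unfolding mat_lincomb_def by (intro eq_matI) auto

lemma mult_mat_lincomb:
  assumes M: "M \<in> carrier_mat nr nr" and X: "\<And>l. l < m \<Longrightarrow> X l \<in> carrier_mat nr nc"
  shows "M * mat_lincomb nr nc c X m = mat_lincomb nr nc c (\<lambda>l. M * X l) m"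
proof (rule eq_matI)
  fix a b assume "a < dim_row (mat_lincomb nr nc c (\<lambda>l. M * X l) m)"
    "b < dim_col (mat_lincomb nr nc c (\<lambda>l. M * X l) m)"
  then have a: "a < nr" and b: "b < nc" by (auto simp: mat_lincomb_def)
  have "(M * mat_lincomb nr nc c X m) $$ (a, b) = (\<Sum>d<nr. M $$ (a, d) * (\<Sum>l<m. c l * X l $$ (d, b)))"
    using M a b by (simp add: mat_lincomb_def scalar_prod_def atLeast0LessThan)
  also have "\<dots> = (\<Sum>l<m. c l * (\<Sum>d<nr. M $$ (a, d) * X l $$ (d, b)))"
    by (simp add: sum_distrib_left mult.left_commute, subst sum.swap, simp)
  also have "\<dots> = mat_lincomb nr nc c (\<lambda>l. M * X l) m $$ (a, b)"
  proof -
    have "(M * X l) $$ (a, b) = (\<Sum>d<nr. M $$ (a, d) * X l $$ (d, b))" if "l < m" for l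
      using M a b X[OF that] by (simp add: scalar_prod_def atLeast0LessThan)
    then show ?thesis using a b by (simp add: mat_lincomb_def)
  qed
  finally show "(M * mat_lincomb nr nc c X m) $$ (a, b) = mat_lincomb nr nc c (\<lambda>l. M * X l) m $$ (a, b)" .
qed (use M in \<open>auto simp: mat_lincomb_def\<close>)

lemma mat_lincomb_mult:
  assumes N: "N \<in> carrier_mat nc nc" and X: "\<And>l. l < m \<Longrightarrow> X l \<in> carrier_mat nr nc"
  shows "mat_lincomb nr nc c X m * N = mat_lincomb nr nc c (\<lambda>l. X l * N) m"
proof (rule eq_matI)
  fix a b assume "a < dim_row (mat_lincomb nr nc c (\<lambda>l. X l * N) m)"
    "b < dim_col (mat_lincomb nr nc c (\<lambda>l. X l * N) m)"
  then have a: "a < nr" and b: "b < nc" by (auto simp: mat_lincomb_def)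
  have "(mat_lincomb nr nc c X m * N) $$ (a, b) = (\<Sum>d<nc. (\<Sum>l<m. c l * X l $$ (a, d)) * N $$ (d, b))"
    using N a b by (simp add: mat_lincomb_def scalar_prod_def atLeast0LessThan)
  also have "\<dots> = (\<Sum>l<m. c l * (\<Sum>d<nc. X l $$ (a, d) * N $$ (d, b)))"
    by (simp add: sum_distrib_left sum_distrib_right mult.assoc, subst sum.swap, simp)
  also have "\<dots> = mat_lincomb nr nc c (\<lambda>l. X l * N) m $$ (a, b)"
  proof -
    have "(X l * N) $$ (a, b) = (\<Sum>d<nc. X l $$ (a, d) * N $$ (d, b))" if "l < m" for l
      using N a b X[OF that] by (simp add: scalar_prod_def atLeast0LessThan)
    then show ?thesis using a b by (simp add: mat_lincomb_def)
  qed
  finally show "(mat_lincomb nr nc c X m * N) $$ (a, b) = mat_lincomb nr nc c (\<lambda>l. X l * N) m $$ (a, b)" .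
qed (use N in \<open>auto simp: mat_lincomb_def\<close>)

lemma mat_lincomb_sandwich:
  assumes A1: "A1 \<in> carrier_mat nr nr" and A2: "A2 \<in> carrier_mat nc nc"
    and X: "\<And>l. l < m \<Longrightarrow> X l \<in> carrier_mat nr nc"
  shows "A1 * mat_lincomb nr nc c X m * transpose_mat A2
       = mat_lincomb nr nc c (\<lambda>l. A1 * X l * transpose_mat A2) m"
proof -
  have "A1 * mat_lincomb nr nc c X m = mat_lincomb nr nc c (\<lambda>l. A1 * X l) m"
    by (rule mult_mat_lincomb[OF A1 X])
  moreover have "\<dots> * transpose_mat A2 = mat_lincomb nr nc c (\<lambda>l. A1 * X l * transpose_mat A2) m"
    by (rule mat_lincomb_mult) (use A1 A2 X in auto)
  ultimately show ?thesis by simp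
qed

subsection \<open>Kronecker products\<close>

lemma kron_carrier:
  "C \<in> carrier_mat n n \<Longrightarrow> B \<in> carrier_mat m m \<Longrightarrow> kron C B \<in> carrier_mat (m * n) (m * n)"
  unfolding kron_def carrier_mat_def by (auto simp: mult.commute)

lemma kron_index:
  "C \<in> carrier_mat n n \<Longrightarrow> B \<in> carrier_mat m m \<Longrightarrow> i < m * n \<Longrightarrow> j < m * n \<Longrightarrow>
   kron C B $$ (i, j) = C $$ (i div m, j div m) * B $$ (i mod m, j mod m)"
  unfolding kron_def by (auto simp: mult.commute)

lemma kron_mult_vecz:
  fixes C B X :: "'a :: comm_semiring_1 mat"
  assumes C: "C \<in> carrier_mat n n" and B: "B \<in> carrier_mat m m" and X: "X \<in> carrier_mat m n"
  shows "kron C B *\<^sub>v vecz X = vecz (B * X * transpose_mat C)"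
proof (rule eq_vecI)
  have BXC: "B * X * transpose_mat C \<in> carrier_mat m n" using B X C by auto
  show "dim_vec (kron C B *\<^sub>v vecz X) = dim_vec (vecz (B * X * transpose_mat C))"
    using kron_carrier[OF C B] vecz_carrier[OF BXC] by simp
  fix i assume "i < dim_vec (vecz (B * X * transpose_mat C))"
  then have i: "i < m * n" using vecz_carrier[OF BXC] by simp
  note i' = mod_div_less_of_less_mult[OF i]
  have "(kron C B *\<^sub>v vecz X) $ i = (\<Sum>k<n * m. kron C B $$ (i, k) * vecz X $ k)"
    using kron_carrier[OF C B] vecz_carrier[OF X] i
    by (simp add: scalar_prod_def atLeast0LessThan mult.commute)
  also have "\<dots> = (\<Sum>c<n. \<Sum>d<m. kron C B $$ (i, d + m * c) * vecz X $ (d + m * c))"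
    by (rule sum_lessThan_mult_nat)
  also have "\<dots> = (\<Sum>c<n. \<Sum>d<m. C $$ (i div m, c) * B $$ (i mod m, d) * X $$ (d, c))"
    using i mixed_radix_less kron_index[OF C B] vecz_index[OF X] by (intro sum.cong refl) simp
  also have "\<dots> = (\<Sum>c<n. (\<Sum>d<m. B $$ (i mod m, d) * X $$ (d, c)) * C $$ (i div m, c))"
    by (simp add: sum_distrib_right, intro sum.cong refl, simp add: algebra_simps)
  also have "\<dots> = (B * X * transpose_mat C) $$ (i mod m, i div m)"
    using B X C i'
    by (simp add: scalar_prod_def atLeast0LessThan sum_distrib_left sum_distrib_right mult.assoc,
        subst sum.swap, simp)
  also have "\<dots> = vecz (B * X * transpose_mat C) $ i" using vecz_index[OF BXC i] by simp
  finally show "(kron C B *\<^sub>v vecz X) $ i = vecz (B * X * transpose_mat C) $ i" .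
qed

lemma det_kron_eq_0_iff:
  fixes C B :: "'a :: field mat"
  assumes C: "C \<in> carrier_mat n n" and B: "B \<in> carrier_mat m m"
  shows "det (kron C B) = 0 \<longleftrightarrow>
    (\<exists>X \<in> carrier_mat m n. X \<noteq> 0\<^sub>m m n \<and> B * X * transpose_mat C = 0\<^sub>m m n)"
proof
  assume "det (kron C B) = 0"
  then obtain v where v: "v \<in> carrier_vec (m * n)" "v \<noteq> 0\<^sub>v (m * n)" "kron C B *\<^sub>v v = 0\<^sub>v (m * n)"
    using det_0_iff_vec_prod_zero_field[OF kron_carrier[OF C B]] by blast
  define X where "X = mat m n (\<lambda>(a, b). v $ (a + m * b))"
  have X: "X \<in> carrier_mat m n" and vX: "vecz X = v"
    unfolding X_def using vecz_unvec[OF v(1)] by auto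
  have BXC: "B * X * transpose_mat C \<in> carrier_mat m n" using B X C by auto
  have "vecz (B * X * transpose_mat C) = 0\<^sub>v (m * n)"
    using kron_mult_vecz[OF C B X] v(3) vX by simp
  then have "B * X * transpose_mat C = 0\<^sub>m m n" using vecz_eq_zero_iff[OF BXC] by blast
  moreover have "X \<noteq> 0\<^sub>m m n" using v(2) vX vecz_zero by auto
  ultimately show "\<exists>X \<in> carrier_mat m n. X \<noteq> 0\<^sub>m m n \<and> B * X * transpose_mat C = 0\<^sub>m m n"
    using X by blast
next
  assume "\<exists>X \<in> carrier_mat m n. X \<noteq> 0\<^sub>m m n \<and> B * X * transpose_mat C = 0\<^sub>m m n"
  then obtain X where X: "X \<in> carrier_mat m n" "X \<noteq> 0\<^sub>m m n" "B * X * transpose_mat C = 0\<^sub>m m n"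
    by blast
  have "kron C B *\<^sub>v vecz X = 0\<^sub>v (m * n)" using kron_mult_vecz[OF C B X(1)] X(3) vecz_zero by simp
  moreover have "vecz X \<noteq> 0\<^sub>v (m * n)" using vecz_eq_zero_iff[OF X(1)] X(2) by simp
  ultimately show "det (kron C B) = 0"
    using det_0_iff_vec_prod_zero_field[OF kron_carrier[OF C B]] vecz_carrier[OF X(1)] by blast
qed

lemma invertible_kron:
  fixes C B :: "'a :: field mat"
  assumes C: "C \<in> carrier_mat n n" "invertible_mat C" and B: "B \<in> carrier_mat m m" "invertible_mat B"
  shows "invertible_mat (kron C B)"
proof -
  have "X = 0\<^sub>m m n" if X: "X \<in> carrier_mat m n" and "B * X * transpose_mat C = 0\<^sub>m m n" for X
  proof -
    have "X = mat_inv B * (B * X * transpose_mat C) * transpose_mat (mat_inv C)"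
      using inverse_sandwich_cancel[OF B(1) mat_inv_carrier[OF B] mat_inv_left[OF B]
          C(1) mat_inv_carrier[OF C] mat_inv_left[OF C] X] by simp
    also have "\<dots> = 0\<^sub>m m n"
      using that(2) mat_inv_carrier[OF B] mat_inv_carrier[OF C] by simp
    finally show ?thesis .
  qed
  then show ?thesis
    using invertible_mat_iff_det[OF kron_carrier[OF C(1) B(1)]] det_kron_eq_0_iff[OF C(1) B(1)] by blast
qed

text \<open>A singular factor yields a nonzero \<open>X\<close> with \<open>B X C\<^sup>T = 0\<close>: if \<open>C v = 0\<close>, take all
  rows of \<open>X\<close> equal to \<open>v\<close>; if \<open>B w = 0\<close>, take all columns equal to \<open>w\<close>.\<close>

lemma invertible_kron_factors:
  fixes C B :: "'a :: field mat"
  assumes C: "C \<in> carrier_mat n n" and B: "B \<in> carrier_mat m m" and "0 < m" and "0 < n"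
    and inv: "invertible_mat (kron C B)"
  shows "invertible_mat C" and "invertible_mat B"
proof -
  have no_kernel: "X = 0\<^sub>m m n" if "X \<in> carrier_mat m n" and "B * X * transpose_mat C = 0\<^sub>m m n" for X
    using inv invertible_mat_iff_det[OF kron_carrier[OF C B]] det_kron_eq_0_iff[OF C B] that by blast
  show "invertible_mat C"
  proof (rule ccontr)
    assume "\<not> invertible_mat C"
    then obtain v where v: "v \<in> carrier_vec n" "v \<noteq> 0\<^sub>v n" "C *\<^sub>v v = 0\<^sub>v n"
      using det_0_iff_vec_prod_zero_field[OF C] invertible_mat_iff_det[OF C] by blast
    then obtain c where c: "c < n" "v $ c \<noteq> 0" by (metis carrier_vecD eq_vecI index_zero_vec)
    define X where "X = mat m n (\<lambda>(a, d). v $ d)"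
    have X: "X \<in> carrier_mat m n" unfolding X_def by auto
    have "X * transpose_mat C = 0\<^sub>m m n"
    proof (rule eq_matI)
      fix a d assume "a < dim_row (0\<^sub>m m n :: 'a mat)" "d < dim_col (0\<^sub>m m n :: 'a mat)"
      then have a: "a < m" and d: "d < n" by auto
      have "(\<Sum>e<n. C $$ (d, e) * v $ e) = 0"
        using arg_cong[OF v(3), of "\<lambda>w. w $ d"] C v(1) d
        by (simp add: scalar_prod_def atLeast0LessThan)
      then show "(X * transpose_mat C) $$ (a, d) = 0\<^sub>m m n $$ (a, d)"
        using a d C unfolding X_def by (simp add: scalar_prod_def atLeast0LessThan mult.commute)
    qed (use X C in auto)
    then have "B * X * transpose_mat C = 0\<^sub>m m n"
      using assoc_mult_mat[OF B X transpose_carrier_mat[THEN iffD2, OF C]] B by simp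
    moreover have "X $$ (0, c) \<noteq> 0\<^sub>m m n $$ (0, c)" using c \<open>0 < m\<close> unfolding X_def by simp
    then have "X \<noteq> 0\<^sub>m m n" by metis
    ultimately show False using no_kernel X by blast
  qed
  show "invertible_mat B"
  proof (rule ccontr)
    assume "\<not> invertible_mat B"
    then obtain w where w: "w \<in> carrier_vec m" "w \<noteq> 0\<^sub>v m" "B *\<^sub>v w = 0\<^sub>v m"
      using det_0_iff_vec_prod_zero_field[OF B] invertible_mat_iff_det[OF B] by blast
    then obtain a where a: "a < m" "w $ a \<noteq> 0" by (metis carrier_vecD eq_vecI index_zero_vec)
    define X where "X = mat m n (\<lambda>(d, c). w $ d)"
    have X: "X \<in> carrier_mat m n" unfolding X_def by auto
    have "B * X = 0\<^sub>m m n"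
    proof (rule eq_matI)
      fix d c assume "d < dim_row (0\<^sub>m m n :: 'a mat)" "c < dim_col (0\<^sub>m m n :: 'a mat)"
      then have d: "d < m" and c: "c < n" by auto
      have "(\<Sum>e<m. B $$ (d, e) * w $ e) = 0"
        using arg_cong[OF w(3), of "\<lambda>u. u $ d"] B w(1) d
        by (simp add: scalar_prod_def atLeast0LessThan)
      then show "(B * X) $$ (d, c) = 0\<^sub>m m n $$ (d, c)"
        using d c B unfolding X_def by (simp add: scalar_prod_def atLeast0LessThan)
    qed (use X B in auto)
    then have "B * X * transpose_mat C = 0\<^sub>m m n" using C by simp
    moreover have "X $$ (a, 0) \<noteq> 0\<^sub>m m n $$ (a, 0)" using a \<open>0 < n\<close> unfolding X_def by simp
    then have "X \<noteq> 0\<^sub>m m n" by metis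
    ultimately show False using no_kernel X by blast
  qed
qed

subsection \<open>Rank and minors\<close>

lemma det_2x2:
  fixes A :: "'a :: comm_ring_1 mat"
  assumes A: "A \<in> carrier_mat 2 2"
  shows "det A = A $$ (0, 0) * A $$ (1, 1) - A $$ (0, 1) * A $$ (1, 0)"
proof -
  have "det A = A $$ (0, 0) * cofactor A 0 0 + A $$ (1, 0) * cofactor A 1 0"
    using laplace_expansion_column[OF A, of 0] by (simp add: numeral_2_eq_2)
  moreover have "mat_delete A i 0 \<in> carrier_mat 1 1" for i using mat_delete_carrier[OF A] by simp
  then have "cofactor A 0 0 = A $$ (1, 1)" and "cofactor A 1 0 = - A $$ (0, 1)"
    using A by (simp_all add: cofactor_def det_single mat_delete_def)
  ultimately show ?thesis by (simp add: algebra_simps)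
qed

lemma rank_ge_1_of_nonzero_entry:
  fixes R :: "'a :: field mat"
  assumes R: "R \<in> carrier_mat m k" and p: "p < m" and q: "q < k" and nz: "R $$ (p, q) \<noteq> 0"
  shows "1 \<le> vec_space.rank m R"
proof -
  let ?S = "submatrix R {p} {q}"
  have rows: "{i. i < m \<and> i \<in> {p}} = {p}" and cols: "{j. j < k \<and> j \<in> {q}} = {q}"
    using p q by auto
  have "dim_row ?S = 1" "dim_col ?S = 1"
    unfolding dim_submatrix carrier_matD[OF R] rows cols by simp_all
  then have S: "?S \<in> carrier_mat 1 1" by auto
  have positions: "{a \<in> {p}. a < p} = {}" "{a \<in> {q}. a < q} = {}" by auto
  have "?S $$ (card {a \<in> {p}. a < p}, card {a \<in> {q}. a < q}) = R $$ (p, q)"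
    by (rule submatrix_index_card) (use R p q in auto)
  then have "det ?S \<noteq> 0" unfolding positions using det_single[OF S] nz by simp
  then have "card {j. j < k \<and> j \<in> {q}} \<le> vec_space.rank m R" by (rule vec_space.rank_gt_minor[OF R])
  then show ?thesis unfolding cols by simp
qed

lemma rank_ge_2_of_nonzero_minor:
  fixes R :: "'a :: field mat"
  assumes R: "R \<in> carrier_mat m k" and p: "p1 < p2" "p2 < m" and q: "q1 < q2" "q2 < k"
    and nz: "R $$ (p1, q1) * R $$ (p2, q2) \<noteq> R $$ (p1, q2) * R $$ (p2, q1)"
  shows "2 \<le> vec_space.rank m R"
proof -
  let ?S = "submatrix R {p1, p2} {q1, q2}"
  have rows: "{i. i < m \<and> i \<in> {p1, p2}} = {p1, p2}" and cols: "{j. j < k \<and> j \<in> {q1, q2}} = {q1, q2}"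
    using p q by auto
  have "dim_row ?S = 2" "dim_col ?S = 2"
    unfolding dim_submatrix carrier_matD[OF R] rows cols using p q by simp_all
  then have S: "?S \<in> carrier_mat 2 2" by auto
  have entry: "?S $$ (card {a \<in> {p1, p2}. a < i}, card {a \<in> {q1, q2}. a < j}) = R $$ (i, j)"
    if "i \<in> {p1, p2}" "j \<in> {q1, q2}" for i j
    by (rule submatrix_index_card) (use R p q that in auto)
  have positions: "{a \<in> {p1, p2}. a < p1} = {}" "{a \<in> {p1, p2}. a < p2} = {p1}"
    "{a \<in> {q1, q2}. a < q1} = {}" "{a \<in> {q1, q2}. a < q2} = {q1}"
    using p q by auto
  have "?S $$ (0, 0) = R $$ (p1, q1)" "?S $$ (1, 1) = R $$ (p2, q2)"
    "?S $$ (0, 1) = R $$ (p1, q2)" "?S $$ (1, 0) = R $$ (p2, q1)"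
    using entry[of p1 q1, unfolded positions] entry[of p2 q2, unfolded positions]
      entry[of p1 q2, unfolded positions] entry[of p2 q1, unfolded positions] by simp_all
  then have "det ?S \<noteq> 0" using det_2x2[OF S] nz by simp
  then have "card {j. j < k \<and> j \<in> {q1, q2}} \<le> vec_space.rank m R" by (rule vec_space.rank_gt_minor[OF R])
  then show ?thesis unfolding cols using q by simp
qed

lemma rank_1_imp_product_entries:
  fixes R :: "'a :: field mat"
  assumes R: "R \<in> carrier_mat m k" and rk: "vec_space.rank m R = 1"
  shows "\<exists>f g. \<forall>p<m. \<forall>q<k. R $$ (p, q) = f p * g q"
proof (cases "\<forall>p<m. \<forall>q<k. R $$ (p, q) = 0")
  case True
  then show ?thesis by (intro exI[of _ "\<lambda>_. 0"]) auto
next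
  case False
  then obtain p0 q0 where p0: "p0 < m" and q0: "q0 < k" and nz: "R $$ (p0, q0) \<noteq> 0" by auto
  have minor: "R $$ (a1, b1) * R $$ (a2, b2) = R $$ (a1, b2) * R $$ (a2, b1)"
    if "a1 < a2" "a2 < m" "b1 < b2" "b2 < k" for a1 a2 b1 b2
    using rank_ge_2_of_nonzero_minor[OF R that] rk by fastforce
  have cross: "R $$ (p, q) * R $$ (p0, q0) = R $$ (p, q0) * R $$ (p0, q)" if p: "p < m" and q: "q < k" for p q
  proof -
    consider "p = p0" | "q = q0" | "p < p0" "q < q0" | "p < p0" "q0 < q" | "p0 < p" "q < q0"
      | "p0 < p" "q0 < q"
      by linarith
    then show ?thesis
    proof cases
      case 3
      then show ?thesis using minor[of p p0 q q0] p0 q0 by simp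
    next
      case 4
      then show ?thesis using minor[of p p0 q0 q] p0 q by (simp add: mult.commute)
    next
      case 5
      then show ?thesis using minor[of p0 p q q0] p q0 by (simp add: mult.commute)
    next
      case 6
      then show ?thesis using minor[of p0 p q0 q] p q by (simp add: mult.commute)
    qed (auto simp: mult.commute)
  qed
  show ?thesis
  proof (intro exI allI impI)
    fix p q assume "p < m" "q < k"
    from cross[OF this] nz show "R $$ (p, q) = R $$ (p, q0) / R $$ (p0, q0) * R $$ (p0, q)"
      by (simp add: field_simps)
  qed
qed

subsection \<open>Realignment\<close>

lemma realign_carrier: "realign m n M \<in> carrier_mat (n * n) (m * m)"
  unfolding realign_def by auto

lemma realign_index:
  "p < n * n \<Longrightarrow> q < m * m \<Longrightarrow>
   realign m n M $$ (p, q) = M $$ ((p mod n) * m + q mod m, (p div n) * m + q div m)"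
  unfolding realign_def by auto

text \<open>Realignment permutes the entries of \<open>M\<close>; this is the inverse of that permutation.\<close>

lemma realign_index_mixed_radix:
  assumes i: "i < m * n" and j: "j < m * n"
  shows "realign m n M $$ (i div m + n * (j div m), i mod m + m * (j mod m)) = M $$ (i, j)"
proof -
  note i' = mod_div_less_of_less_mult[OF i] and j' = mod_div_less_of_less_mult[OF j]
  have "i div m + n * (j div m) < n * n" "i mod m + m * (j mod m) < m * m"
    using mixed_radix_less i' j' by auto
  then show ?thesis using i' j' by (simp add: realign_index mult.commute)
qed

lemma realign_kron:
  assumes C: "C \<in> carrier_mat n n" and B: "B \<in> carrier_mat m m" and p: "p < n * n" and q: "q < m * m"
  shows "realign m n (kron C B) $$ (p, q) = C $$ (p mod n, p div n) * B $$ (q mod m, q div m)"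
proof -
  note p' = mod_div_less_of_less_mult[OF p] and q' = mod_div_less_of_less_mult[OF q]
  have "(p mod n) * m + q mod m < m * n" "(p div n) * m + q div m < m * n"
    using mixed_radix_less[OF q'(1) p'(1)] mixed_radix_less[OF q'(2) p'(2)] by (simp_all add: mult.commute)
  then show ?thesis using q' by (simp add: realign_index[OF p q] kron_index[OF C B])
qed

lemma rank_realign_eq_1_iff:
  fixes K :: "'a :: field mat"
  assumes K: "K \<in> carrier_mat (m * n) (m * n)" and nz: "K \<noteq> 0\<^sub>m (m * n) (m * n)"
  shows "vec_space.rank (n * n) (realign m n K) = 1 \<longleftrightarrow>
    (\<exists>C B. C \<in> carrier_mat n n \<and> B \<in> carrier_mat m m \<and> K = kron C B)"
proof
  assume "vec_space.rank (n * n) (realign m n K) = 1"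
  then obtain f g where fg: "\<forall>p<n * n. \<forall>q<m * m. realign m n K $$ (p, q) = f p * g q"
    using rank_1_imp_product_entries[OF realign_carrier] by blast
  define C where "C = mat n n (\<lambda>(a, b). f (a + n * b))"
  define B where "B = mat m m (\<lambda>(a, b). g (a + m * b))"
  have C: "C \<in> carrier_mat n n" and B: "B \<in> carrier_mat m m" unfolding C_def B_def by auto
  have "K = kron C B"
  proof (rule eq_matI)
    fix i j assume "i < dim_row (kron C B)" "j < dim_col (kron C B)"
    then have i: "i < m * n" and j: "j < m * n" using kron_carrier[OF C B] by auto
    note i' = mod_div_less_of_less_mult[OF i] and j' = mod_div_less_of_less_mult[OF j]
    have "K $$ (i, j) = f (i div m + n * (j div m)) * g (i mod m + m * (j mod m))"
      using realign_index_mixed_radix[OF i j, of K] fg mixed_radix_less i' j' by simp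
    then show "K $$ (i, j) = kron C B $$ (i, j)"
      using kron_index[OF C B i j] i' j' by (simp add: C_def B_def)
  qed (use K kron_carrier[OF C B] in auto)
  then show "\<exists>C B. C \<in> carrier_mat n n \<and> B \<in> carrier_mat m m \<and> K = kron C B" using C B by blast
next
  assume "\<exists>C B. C \<in> carrier_mat n n \<and> B \<in> carrier_mat m m \<and> K = kron C B"
  then obtain C B where C: "C \<in> carrier_mat n n" and B: "B \<in> carrier_mat m m" and KCB: "K = kron C B"
    by blast
  have "\<exists>i<m * n. \<exists>j<m * n. K $$ (i, j) \<noteq> 0"
  proof (rule ccontr)
    assume "\<not> (\<exists>i<m * n. \<exists>j<m * n. K $$ (i, j) \<noteq> 0)"
    then have "K = 0\<^sub>m (m * n) (m * n)" using K by (intro eq_matI) auto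
    with nz show False ..
  qed
  then obtain i j where i: "i < m * n" and j: "j < m * n" and nz_entry: "K $$ (i, j) \<noteq> 0"
    by blast
  have p: "i div m + n * (j div m) < n * n" and q: "i mod m + m * (j mod m) < m * m"
    using mixed_radix_less mod_div_less_of_less_mult[OF i] mod_div_less_of_less_mult[OF j] by auto
  have "1 \<le> vec_space.rank (n * n) (realign m n K)"
    by (rule rank_ge_1_of_nonzero_entry[OF realign_carrier p q])
      (use realign_index_mixed_radix[OF i j, of K] nz_entry in simp)
  moreover have "vec_space.rank (n * n) (realign m n K) \<le> 1"
    using realign_kron[OF C B] realign_carrier[of m n K] unfolding KCB
    by (intro vec_space.rank_le_1_product_entries[OF realign_carrier,
          of _ _ _ "\<lambda>p. C $$ (p mod n, p div n)" "\<lambda>q. B $$ (q mod m, q div m)"]) auto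
  ultimately show "vec_space.rank (n * n) (realign m n K) = 1" by simp
qed

subsection \<open>Block upper triangular matrices\<close>

lemma col_four_block_mat_lower_left_zero:
  assumes "P \<in> carrier_mat r r" and "Y \<in> carrier_mat r s" and "Pb \<in> carrier_mat s s" and "k < r"
  shows "col (four_block_mat P Y (0\<^sub>m s r) Pb) k = vec (r + s) (\<lambda>l. if l < r then P $$ (l, k) else 0)"
  using assms by (intro eq_vecI) auto

lemma four_block_mat_lower_left_zero_of_cols:
  fixes T P :: "'a :: zero mat"
  assumes T: "T \<in> carrier_mat n n" and P: "P \<in> carrier_mat r r" and r: "r \<le> n"
    and cols: "\<And>k. k < r \<Longrightarrow> col T k = vec n (\<lambda>l. if l < r then P $$ (l, k) else 0)"
  obtains T2 T4 where "T2 \<in> carrier_mat r (n - r)" and "T4 \<in> carrier_mat (n - r) (n - r)"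
    and "T = four_block_mat P T2 (0\<^sub>m (n - r) r) T4"
proof -
  obtain T1 T2 T3 T4 where split: "split_block T r r = (T1, T2, T3, T4)"
    by (metis prod_cases4)
  have "dim_row T = r + (n - r)" "dim_col T = r + (n - r)" using T r by auto
  note blocks = split_block[OF split this]
  have T_entry: "T $$ (l, k) = (if l < r then P $$ (l, k) else 0)" if "l < n" "k < r" for l k
    using arg_cong[OF cols[OF that(2)], of "\<lambda>v. v $ l"] T that r by simp
  have "T1 = P"
  proof (rule eq_matI)
    fix i j assume "i < dim_row P" "j < dim_col P"
    then have "i < r" "j < r" using P by auto
    moreover from this have "T $$ (i, j) = T1 $$ (i, j)"
      using blocks(1-4) by (subst blocks(5)) (auto simp: carrier_matD)
    ultimately show "T1 $$ (i, j) = P $$ (i, j)" using T_entry[of i j] r by simp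
  qed (use blocks P in auto)
  moreover have "T3 = 0\<^sub>m (n - r) r"
  proof (rule eq_matI)
    fix i j assume "i < dim_row (0\<^sub>m (n - r) r :: 'a mat)" "j < dim_col (0\<^sub>m (n - r) r :: 'a mat)"
    then have "i < n - r" "j < r" by auto
    moreover from this have "T $$ (r + i, j) = T3 $$ (i, j)"
      using blocks(1-4) by (subst blocks(5)) (auto simp: carrier_matD)
    ultimately show "T3 $$ (i, j) = 0\<^sub>m (n - r) r $$ (i, j)" using T_entry[of "r + i" j] by simp
  qed (use blocks in auto)
  ultimately have "T = four_block_mat P T2 (0\<^sub>m (n - r) r) T4" using blocks(5) by simp
  with blocks(2,4) show ?thesis by (rule that)
qed

lemma state_mat_carrier: "state_mat m n G \<in> carrier_mat (m * n) (m * n)"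
  unfolding state_mat_def by auto

lemma col_state_mat:
  assumes "G j \<in> carrier_mat m n" and "j < m * n"
  shows "col (state_mat m n G) j = vecz (G j)"
  using assms dim_vecz[OF assms(1)] by (intro eq_vecI) (auto simp: state_mat_def vecz_index)

lemma state_mat_mult_padded_vec:
  assumes G: "\<forall>l<m * n. G l \<in> carrier_mat m n" and r: "r \<le> m * n"
  shows "state_mat m n G *\<^sub>v vec (m * n) (\<lambda>l. if l < r then c l else 0) = vecz (mat_lincomb m n c G r)"
proof (rule eq_vecI)
  fix i assume "i < dim_vec (vecz (mat_lincomb m n c G r))"
  then have i: "i < m * n" using dim_vecz[OF mat_lincomb_carrier[of m n c G r]] by simp
  note i' = mod_div_less_of_less_mult[OF i]
  have "(state_mat m n G *\<^sub>v vec (m * n) (\<lambda>l. if l < r then c l else 0)) $ i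
      = (\<Sum>l<m * n. G l $$ (i mod m, i div m) * (if l < r then c l else 0))"
    using i G by (auto simp: state_mat_def scalar_prod_def atLeast0LessThan vecz_index intro!: sum.cong)
  also have "\<dots> = (\<Sum>l<r. G l $$ (i mod m, i div m) * (if l < r then c l else 0))"
    by (rule sum.mono_neutral_right) (use r in auto)
  also have "\<dots> = (\<Sum>l<r. c l * G l $$ (i mod m, i div m))" by (simp add: mult.commute)
  also have "\<dots> = vecz (mat_lincomb m n c G r) $ i"
    unfolding vecz_index[OF mat_lincomb_carrier i] using i' by (simp add: mat_lincomb_def)
  finally show "(state_mat m n G *\<^sub>v vec (m * n) (\<lambda>l. if l < r then c l else 0)) $ i
      = vecz (mat_lincomb m n c G r) $ i" .
qed (simp add: dim_vecz[OF mat_lincomb_carrier[of m n c G r]] state_mat_def)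

lemma invertible_state_mat:
  assumes "complementary_state r m n G"
  shows "invertible_mat (state_mat m n G)"
proof -
  have G: "\<forall>l<m * n. G l \<in> carrier_mat m n" and indep: "lin_indep_mats m n G (m * n)"
    using assms unfolding complementary_state_def by auto
  have "v = 0\<^sub>v (m * n)" if v: "v \<in> carrier_vec (m * n)" "state_mat m n G *\<^sub>v v = 0\<^sub>v (m * n)" for v
  proof -
    have "v = vec (m * n) (\<lambda>l. if l < m * n then v $ l else 0)" using v(1) by auto
    then have "vecz (mat_lincomb m n (\<lambda>l. v $ l) G (m * n)) = 0\<^sub>v (m * n)"
      using state_mat_mult_padded_vec[OF G le_refl, of "\<lambda>l. v $ l"] v(2) by simp
    then have zero: "mat_lincomb m n (\<lambda>l. v $ l) G (m * n) = 0\<^sub>m m n"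
      using vecz_eq_zero_iff[OF mat_lincomb_carrier] by blast
    have "(\<Sum>k<m * n. v $ k * G k $$ (i, j)) = 0" if "i < m" "j < n" for i j
      using arg_cong[OF zero, of "\<lambda>M. M $$ (i, j)"] that by (simp add: mat_lincomb_def)
    then have "\<forall>k<m * n. v $ k = 0" using indep unfolding lin_indep_mats_def by blast
    then show ?thesis using v(1) by (intro eq_vecI) auto
  qed
  then show ?thesis
    using invertible_mat_iff_det[OF state_mat_carrier] det_0_iff_vec_prod_zero_field[OF state_mat_carrier]
    by blast
qed

lemma col_kron_mult_state_mat:
  assumes C: "C \<in> carrier_mat n n" and B: "B \<in> carrier_mat m m"
    and G: "\<forall>l<m * n. G l \<in> carrier_mat m n" and k: "k < m * n"
  shows "col (kron C B * state_mat m n G) k = vecz (B * G k * transpose_mat C)"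
  using col_mult2[OF kron_carrier[OF C B] state_mat_carrier k] col_state_mat[of G k m n] G k
    kron_mult_vecz[OF C B] by simp

lemma col_mat_inv_state_mat_kron:
  fixes G G' :: "nat \<Rightarrow> complex mat"
  assumes U: "invertible_mat (state_mat m n G)" and G: "\<forall>l<m * n. G l \<in> carrier_mat m n"
    and G': "\<forall>l<m * n. G' l \<in> carrier_mat m n" and r: "r \<le> m * n"
    and C: "C \<in> carrier_mat n n" and B: "B \<in> carrier_mat m m" and k: "k < r"
    and sandwich: "B * G' k * transpose_mat C = mat_lincomb m n (\<lambda>l. P $$ (l, k)) G r"
  shows "col (mat_inv (state_mat m n G) * (kron C B * state_mat m n G')) k
       = vec (m * n) (\<lambda>l. if l < r then P $$ (l, k) else 0)"
proof -
  let ?U = "state_mat m n G" and ?w = "vec (m * n) (\<lambda>l. if l < r then P $$ (l, k) else 0)"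
  have U_inv: "mat_inv ?U \<in> carrier_mat (m * n) (m * n)"
    by (rule mat_inv_carrier[OF state_mat_carrier U])
  have KU': "kron C B * state_mat m n G' \<in> carrier_mat (m * n) (m * n)"
    by (rule mult_carrier_mat[OF kron_carrier[OF C B] state_mat_carrier])
  have "col (kron C B * state_mat m n G') k = ?U *\<^sub>v ?w"
    using col_kron_mult_state_mat[OF C B G', of k] k r sandwich state_mat_mult_padded_vec[OF G r] by simp
  then have "col (mat_inv ?U * (kron C B * state_mat m n G')) k = mat_inv ?U *\<^sub>v (?U *\<^sub>v ?w)"
    using col_mult2[OF U_inv KU', of k] k r by simp
  also have "\<dots> = ?w"
    using assoc_mult_mat_vec[OF U_inv state_mat_carrier[of m n G], of ?w, symmetric]
      mat_inv_left[OF state_mat_carrier U] by simp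
  finally show ?thesis .
qed

lemma block_transform_invertible:
  fixes G G' :: "nat \<Rightarrow> complex mat"
  assumes cG: "complementary_state r m n G" and cG': "complementary_state r m n G'"
    and r: "r \<le> m * n"
    and P: "P \<in> carrier_mat r r" "invertible_mat P"
    and Pb: "Pb \<in> carrier_mat (m * n - r) (m * n - r)" "invertible_mat Pb"
    and Y: "Y \<in> carrier_mat r (m * n - r)"
  shows "state_mat m n G * four_block_mat P Y (0\<^sub>m (m * n - r) r) Pb * mat_inv (state_mat m n G')
           \<in> carrier_mat (m * n) (m * n)"
    and "invertible_mat
           (state_mat m n G * four_block_mat P Y (0\<^sub>m (m * n - r) r) Pb * mat_inv (state_mat m n G'))"
proof -
  let ?M = "state_mat m n G * four_block_mat P Y (0\<^sub>m (m * n - r) r) Pb * mat_inv (state_mat m n G')"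
  let ?N = "m * n" and ?T = "four_block_mat P Y (0\<^sub>m (m * n - r) r) Pb"
  have U: "state_mat m n G \<in> carrier_mat ?N ?N" "det (state_mat m n G) \<noteq> 0"
    using state_mat_carrier invertible_mat_iff_det[OF state_mat_carrier] invertible_state_mat[OF cG]
    by auto
  note U' = state_mat_carrier[of m n G'] invertible_state_mat[OF cG']
  have U'_inv: "mat_inv (state_mat m n G') \<in> carrier_mat ?N ?N" "det (mat_inv (state_mat m n G')) \<noteq> 0"
    using mat_inv_carrier[OF U'] invertible_mat_iff_det[OF mat_inv_carrier[OF U']]
      invertible_mat_mat_inv[OF U'] by auto
  have "?T \<in> carrier_mat (r + (?N - r)) (r + (?N - r))" using P Pb by auto
  then have T: "?T \<in> carrier_mat ?N ?N" using r by simp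
  have "det ?T = det P * det Pb"
    by (rule det_four_block_mat_lower_left_zero[OF P(1) Y refl Pb(1)])
  then have "det ?T \<noteq> 0" using P Pb invertible_mat_iff_det by auto
  moreover show M: "?M \<in> carrier_mat ?N ?N" using U T U'_inv by auto
  ultimately show "invertible_mat ?M"
    using U U'_inv invertible_mat_iff_det[OF M] det_mult[OF mult_carrier_mat[OF U(1) T] U'_inv(1)]
      det_mult[OF U(1) T] by auto
qed

subsection \<open>SLOCC equivalence\<close>

lemma slocc_equiv_iff_sandwich:
  fixes G G' :: "nat \<Rightarrow> complex mat"
  assumes G: "\<forall>k<r. G k \<in> carrier_mat m n" and G': "\<forall>k<r. G' k \<in> carrier_mat m n"
  shows "slocc_equiv r m n G' G \<longleftrightarrow>
    (\<exists>P C B. P \<in> carrier_mat r r \<and> invertible_mat P \<and> C \<in> carrier_mat n n \<and> invertible_mat C \<and>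
       B \<in> carrier_mat m m \<and> invertible_mat B \<and>
       (\<forall>k<r. B * G' k * transpose_mat C = mat_lincomb m n (\<lambda>l. P $$ (l, k)) G r))"
proof
  assume "slocc_equiv r m n G' G"
  then obtain P0 A1 A2 where P0: "P0 \<in> carrier_mat r r" "invertible_mat P0"
    and A1: "A1 \<in> carrier_mat m m" "invertible_mat A1"
    and A2: "A2 \<in> carrier_mat n n" "invertible_mat A2"
    and G'_eq: "\<forall>k<r. G' k = mat m n (\<lambda>(i, j). \<Sum>l<r. P0 $$ (k, l) * (A1 * G l * transpose_mat A2) $$ (i, j))"
    unfolding slocc_equiv_def by blast
  have "mat_inv A1 * G' k * transpose_mat (mat_inv A2)
      = mat_lincomb m n (\<lambda>l. transpose_mat P0 $$ (l, k)) G r" if k: "k < r" for k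
  proof -
    let ?L = "mat_lincomb m n (\<lambda>l. P0 $$ (k, l)) G r"
    have "G' k = mat_lincomb m n (\<lambda>l. P0 $$ (k, l)) (\<lambda>l. A1 * G l * transpose_mat A2) r"
      using G'_eq k unfolding mat_lincomb_def by simp
    also have "\<dots> = A1 * ?L * transpose_mat A2"
      by (rule mat_lincomb_sandwich[symmetric]) (use A1 A2 G in auto)
    finally have "mat_inv A1 * G' k * transpose_mat (mat_inv A2) = ?L"
      using inverse_sandwich_cancel[OF A1(1) mat_inv_carrier[OF A1] mat_inv_left[OF A1]
          A2(1) mat_inv_carrier[OF A2] mat_inv_left[OF A2] mat_lincomb_carrier] by simp
    also have "?L = mat_lincomb m n (\<lambda>l. transpose_mat P0 $$ (l, k)) G r"
      using P0 k by (intro mat_lincomb_cong) auto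
    finally show ?thesis .
  qed
  moreover have "transpose_mat P0 \<in> carrier_mat r r" "invertible_mat (transpose_mat P0)"
    using P0 invertible_mat_transpose by auto
  moreover have "mat_inv A1 \<in> carrier_mat m m" "invertible_mat (mat_inv A1)"
    using A1 mat_inv_carrier invertible_mat_mat_inv by auto
  moreover have "mat_inv A2 \<in> carrier_mat n n" "invertible_mat (mat_inv A2)"
    using A2 mat_inv_carrier invertible_mat_mat_inv by auto
  ultimately show "\<exists>P C B. P \<in> carrier_mat r r \<and> invertible_mat P \<and> C \<in> carrier_mat n n \<and>
       invertible_mat C \<and> B \<in> carrier_mat m m \<and> invertible_mat B \<and>
       (\<forall>k<r. B * G' k * transpose_mat C = mat_lincomb m n (\<lambda>l. P $$ (l, k)) G r)"
    by blast
next
  assume "\<exists>P C B. P \<in> carrier_mat r r \<and> invertible_mat P \<and> C \<in> carrier_mat n n \<and> invertible_mat C \<and>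
       B \<in> carrier_mat m m \<and> invertible_mat B \<and>
       (\<forall>k<r. B * G' k * transpose_mat C = mat_lincomb m n (\<lambda>l. P $$ (l, k)) G r)"
  then obtain P C B where P: "P \<in> carrier_mat r r" "invertible_mat P"
    and C: "C \<in> carrier_mat n n" "invertible_mat C" and B: "B \<in> carrier_mat m m" "invertible_mat B"
    and sandwich: "\<forall>k<r. B * G' k * transpose_mat C = mat_lincomb m n (\<lambda>l. P $$ (l, k)) G r"
    by blast
  have G'_eq: "G' k = mat_lincomb m n (\<lambda>l. P $$ (l, k)) (\<lambda>l. mat_inv B * G l * transpose_mat (mat_inv C)) r"
    if k: "k < r" for k
  proof -
    have "G' k = mat_inv B * (B * G' k * transpose_mat C) * transpose_mat (mat_inv C)"
      using inverse_sandwich_cancel[OF B(1) mat_inv_carrier[OF B] mat_inv_left[OF B]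
          C(1) mat_inv_carrier[OF C] mat_inv_left[OF C]] G' k by simp
    also have "\<dots> = mat_lincomb m n (\<lambda>l. P $$ (l, k)) (\<lambda>l. mat_inv B * G l * transpose_mat (mat_inv C)) r"
      using sandwich k mat_lincomb_sandwich[OF mat_inv_carrier[OF B] mat_inv_carrier[OF C]] G by simp
    finally show ?thesis .
  qed
  show "slocc_equiv r m n G' G"
    unfolding slocc_equiv_def
  proof (intro exI conjI allI impI)
    show "transpose_mat P \<in> carrier_mat r r" "invertible_mat (transpose_mat P)"
      using P invertible_mat_transpose by auto
    show "mat_inv B \<in> carrier_mat m m" "invertible_mat (mat_inv B)"
      using B mat_inv_carrier invertible_mat_mat_inv by auto
    show "mat_inv C \<in> carrier_mat n n" "invertible_mat (mat_inv C)"
      using C mat_inv_carrier invertible_mat_mat_inv by auto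
    fix k assume "k < r"
    with G'_eq P show "G' k = mat m n (\<lambda>(i, j). \<Sum>l<r. transpose_mat P $$ (k, l)
        * (mat_inv B * G l * transpose_mat (mat_inv C)) $$ (i, j))"
      unfolding mat_lincomb_def by (intro eq_matI) auto
  qed
qed

lemma slocc_equiv_imp_block_kron:
  fixes G G' :: "nat \<Rightarrow> complex mat"
  assumes cG: "complementary_state r m n G" and cG': "complementary_state r m n G'"
    and r: "r \<le> m * n" and slocc: "slocc_equiv r m n G' G"
  shows "\<exists>P Pb Y. P \<in> carrier_mat r r \<and> invertible_mat P \<and>
    Pb \<in> carrier_mat (m * n - r) (m * n - r) \<and> invertible_mat Pb \<and> Y \<in> carrier_mat r (m * n - r) \<and>
    (\<exists>C B. C \<in> carrier_mat n n \<and> B \<in> carrier_mat m m \<and>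
       state_mat m n G * four_block_mat P Y (0\<^sub>m (m * n - r) r) Pb * mat_inv (state_mat m n G') = kron C B)"
proof -
  let ?N = "m * n" and ?U = "state_mat m n G" and ?U' = "state_mat m n G'"
  have G: "\<forall>l<?N. G l \<in> carrier_mat m n" and G': "\<forall>l<?N. G' l \<in> carrier_mat m n"
    using cG cG' unfolding complementary_state_def by auto
  have U: "?U \<in> carrier_mat ?N ?N" "invertible_mat ?U" and U': "?U' \<in> carrier_mat ?N ?N" "invertible_mat ?U'"
    using state_mat_carrier invertible_state_mat[OF cG] invertible_state_mat[OF cG'] by auto
  have Gr: "\<forall>k<r. G k \<in> carrier_mat m n" and G'r: "\<forall>k<r. G' k \<in> carrier_mat m n"
    using G G' r by auto
  obtain P C B where P: "P \<in> carrier_mat r r" "invertible_mat P"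
    and C: "C \<in> carrier_mat n n" "invertible_mat C" and B: "B \<in> carrier_mat m m" "invertible_mat B"
    and sandwich: "\<forall>k<r. B * G' k * transpose_mat C = mat_lincomb m n (\<lambda>l. P $$ (l, k)) G r"
    using slocc slocc_equiv_iff_sandwich[OF Gr G'r] by blast
  define K where "K = kron C B"
  have K: "K \<in> carrier_mat ?N ?N" "invertible_mat K"
    unfolding K_def using kron_carrier[OF C(1) B(1)] invertible_kron[OF C B] by auto
  have KU': "K * ?U' \<in> carrier_mat ?N ?N" using K U' by auto
  define T where "T = mat_inv ?U * (K * ?U')"
  have T: "T \<in> carrier_mat ?N ?N" unfolding T_def using mat_inv_carrier[OF U] KU' by auto
  have col_T: "col T k = vec ?N (\<lambda>l. if l < r then P $$ (l, k) else 0)" if "k < r" for k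
    unfolding T_def K_def
    by (rule col_mat_inv_state_mat_kron[OF U(2) G G' r C(1) B(1) that sandwich[rule_format, OF that]])
  obtain T2 T4 where T2: "T2 \<in> carrier_mat r (?N - r)" and T4: "T4 \<in> carrier_mat (?N - r) (?N - r)"
    and T_block: "T = four_block_mat P T2 (0\<^sub>m (?N - r) r) T4"
    using four_block_mat_lower_left_zero_of_cols[OF T P(1) r col_T] by blast
  have "det T \<noteq> 0"
    using det_mult[OF mat_inv_carrier[OF U] KU'] det_mult[OF K(1) U'(1)]
      invertible_mat_iff_det[OF mat_inv_carrier[OF U]] invertible_mat_mat_inv[OF U]
      invertible_mat_iff_det[OF K(1)] K(2) invertible_mat_iff_det[OF U'(1)] U'(2)
    unfolding T_def by auto
  moreover have "det T = det P * det T4"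
    unfolding T_block by (rule det_four_block_mat_lower_left_zero[OF P(1) T2 refl T4])
  ultimately have T4_inv: "invertible_mat T4" using invertible_mat_iff_det[OF T4] by auto
  have "?U * T * mat_inv ?U' = K"
    unfolding T_def by (rule mat_inv_conjugate_cancel[OF U U' K(1)])
  then show ?thesis using P T2 T4 T4_inv C(1) B(1) unfolding T_block K_def by blast
qed

lemma block_kron_imp_slocc_equiv:
  fixes G G' :: "nat \<Rightarrow> complex mat"
  assumes cG: "complementary_state r m n G" and cG': "complementary_state r m n G'"
    and r: "r \<le> m * n" and "0 < m" and "0 < n"
    and P: "P \<in> carrier_mat r r" "invertible_mat P"
    and Pb: "Pb \<in> carrier_mat (m * n - r) (m * n - r)" "invertible_mat Pb"
    and Y: "Y \<in> carrier_mat r (m * n - r)"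
    and C: "C \<in> carrier_mat n n" and B: "B \<in> carrier_mat m m"
    and eq: "state_mat m n G * four_block_mat P Y (0\<^sub>m (m * n - r) r) Pb * mat_inv (state_mat m n G')
             = kron C B"
  shows "slocc_equiv r m n G' G"
proof -
  let ?N = "m * n" and ?U = "state_mat m n G" and ?U' = "state_mat m n G'"
  define T where "T = four_block_mat P Y (0\<^sub>m (?N - r) r) Pb"
  have G: "\<forall>l<?N. G l \<in> carrier_mat m n" and G': "\<forall>l<?N. G' l \<in> carrier_mat m n"
    using cG cG' unfolding complementary_state_def by auto
  have U: "?U \<in> carrier_mat ?N ?N" and U': "?U' \<in> carrier_mat ?N ?N" "invertible_mat ?U'"
    using state_mat_carrier invertible_state_mat[OF cG'] by auto
  have "T \<in> carrier_mat (r + (?N - r)) (r + (?N - r))" unfolding T_def using P Pb by auto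
  then have T: "T \<in> carrier_mat ?N ?N" using r by simp
  have "invertible_mat (kron C B)"
    using block_transform_invertible(2)[OF cG cG' r P Pb Y] eq by simp
  then have C_inv: "invertible_mat C" and B_inv: "invertible_mat B"
    using invertible_kron_factors[OF C B \<open>0 < m\<close> \<open>0 < n\<close>] by auto
  have UT: "?U * T = kron C B * ?U'"
  proof -
    have "?U * T * mat_inv ?U' * ?U' = ?U * T"
      using assoc_mult_mat[OF mult_carrier_mat[OF U T] mat_inv_carrier[OF U'] U'(1)] mat_inv_left[OF U']
        U T by simp
    then show ?thesis using eq unfolding T_def by simp
  qed
  have "B * G' k * transpose_mat C = mat_lincomb m n (\<lambda>l. P $$ (l, k)) G r" if k: "k < r" for k
  proof -
    have BGC: "B * G' k * transpose_mat C \<in> carrier_mat m n" using B C G' k r by auto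
    have "vecz (B * G' k * transpose_mat C) = col (?U * T) k"
      using col_kron_mult_state_mat[OF C B G', of k] k r UT by simp
    also have "\<dots> = ?U *\<^sub>v vec ?N (\<lambda>l. if l < r then P $$ (l, k) else 0)"
      using col_mult2[OF U T, of k] col_four_block_mat_lower_left_zero[OF P(1) Y Pb(1) k] k r
      unfolding T_def by simp
    also have "\<dots> = vecz (mat_lincomb m n (\<lambda>l. P $$ (l, k)) G r)"
      by (rule state_mat_mult_padded_vec[OF G r])
    finally show ?thesis using vecz_inject[OF BGC mat_lincomb_carrier] by simp
  qed
  moreover have Gr: "\<forall>k<r. G k \<in> carrier_mat m n" and G'r: "\<forall>k<r. G' k \<in> carrier_mat m n"
    using G G' r by auto
  ultimately show ?thesis using slocc_equiv_iff_sandwich[OF Gr G'r] P C C_inv B B_inv by blast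
qed

lemma slocc_equiv_iff_block_kron:
  fixes G G' :: "nat \<Rightarrow> complex mat"
  assumes cG: "complementary_state r m n G" and cG': "complementary_state r m n G'"
    and r: "r \<le> m * n" and m: "0 < m" and n: "0 < n"
  shows "slocc_equiv r m n G' G \<longleftrightarrow>
    (\<exists>P Pb Y. P \<in> carrier_mat r r \<and> invertible_mat P \<and>
       Pb \<in> carrier_mat (m * n - r) (m * n - r) \<and> invertible_mat Pb \<and> Y \<in> carrier_mat r (m * n - r) \<and>
       (\<exists>C B. C \<in> carrier_mat n n \<and> B \<in> carrier_mat m m \<and>
          state_mat m n G * four_block_mat P Y (0\<^sub>m (m * n - r) r) Pb * mat_inv (state_mat m n G')
            = kron C B))"
proof
  assume "slocc_equiv r m n G' G"
  then show "\<exists>P Pb Y. P \<in> carrier_mat r r \<and> invertible_mat P \<and>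
       Pb \<in> carrier_mat (m * n - r) (m * n - r) \<and> invertible_mat Pb \<and> Y \<in> carrier_mat r (m * n - r) \<and>
       (\<exists>C B. C \<in> carrier_mat n n \<and> B \<in> carrier_mat m m \<and>
          state_mat m n G * four_block_mat P Y (0\<^sub>m (m * n - r) r) Pb * mat_inv (state_mat m n G')
            = kron C B)"
    by (rule slocc_equiv_imp_block_kron[OF cG cG' r])
next
  assume "\<exists>P Pb Y. P \<in> carrier_mat r r \<and> invertible_mat P \<and>
       Pb \<in> carrier_mat (m * n - r) (m * n - r) \<and> invertible_mat Pb \<and> Y \<in> carrier_mat r (m * n - r) \<and>
       (\<exists>C B. C \<in> carrier_mat n n \<and> B \<in> carrier_mat m m \<and>
          state_mat m n G * four_block_mat P Y (0\<^sub>m (m * n - r) r) Pb * mat_inv (state_mat m n G')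
            = kron C B)"
  then obtain P Pb Y C B where "P \<in> carrier_mat r r" "invertible_mat P"
    "Pb \<in> carrier_mat (m * n - r) (m * n - r)" "invertible_mat Pb" "Y \<in> carrier_mat r (m * n - r)"
    "C \<in> carrier_mat n n" "B \<in> carrier_mat m m"
    "state_mat m n G * four_block_mat P Y (0\<^sub>m (m * n - r) r) Pb * mat_inv (state_mat m n G') = kron C B"
    by blast
  then show "slocc_equiv r m n G' G" by (rule block_kron_imp_slocc_equiv[OF cG cG' r m n])
qed

lemma rank_realign_block_transform_eq_1_iff:
  fixes G G' :: "nat \<Rightarrow> complex mat"
  assumes cG: "complementary_state r m n G" and cG': "complementary_state r m n G'"
    and r: "r \<le> m * n" and "0 < m" and "0 < n"
    and P: "P \<in> carrier_mat r r" "invertible_mat P"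
    and Pb: "Pb \<in> carrier_mat (m * n - r) (m * n - r)" "invertible_mat Pb"
    and Y: "Y \<in> carrier_mat r (m * n - r)"
  shows "vec_space.rank (n * n) (realign m n
           (state_mat m n G * four_block_mat P Y (0\<^sub>m (m * n - r) r) Pb * mat_inv (state_mat m n G'))) = 1
    \<longleftrightarrow> (\<exists>C B. C \<in> carrier_mat n n \<and> B \<in> carrier_mat m m \<and>
          state_mat m n G * four_block_mat P Y (0\<^sub>m (m * n - r) r) Pb * mat_inv (state_mat m n G')
            = kron C B)"
proof (rule rank_realign_eq_1_iff)
  note M = block_transform_invertible[OF cG cG' r P Pb Y]
  show "state_mat m n G * four_block_mat P Y (0\<^sub>m (m * n - r) r) Pb * mat_inv (state_mat m n G')
      \<in> carrier_mat (m * n) (m * n)" by (rule M(1))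
  show "state_mat m n G * four_block_mat P Y (0\<^sub>m (m * n - r) r) Pb * mat_inv (state_mat m n G')
      \<noteq> 0\<^sub>m (m * n) (m * n)"
    using M invertible_mat_iff_det[OF M(1)] \<open>0 < m\<close> \<open>0 < n\<close> by auto
qed

theorem lemma1:
  fixes r I1 I2 :: nat and G G' :: "nat \<Rightarrow> complex mat"
  assumes "0 < r" and "0 < I1" and "0 < I2" and "r \<le> I1 * I2"
    and "\<forall>k<r. G k \<in> carrier_mat I1 I2" and "\<forall>k<r. G' k \<in> carrier_mat I1 I2"
    and "lin_indep_mats I1 I2 G r" and "lin_indep_mats I1 I2 G' r"
    and "complementary_state r I1 I2 G" and "complementary_state r I1 I2 G'"
  shows "(slocc_equiv r I1 I2 G' G \<longleftrightarrow>
           (\<exists>P Pb Y. P \<in> carrier_mat r r \<and> invertible_mat P \<and>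
              Pb \<in> carrier_mat (I1*I2 - r) (I1*I2 - r) \<and> invertible_mat Pb \<and>
              Y \<in> carrier_mat r (I1*I2 - r) \<and>
              vec_space.rank (I2*I2)
                (realign I1 I2 (state_mat I1 I2 G * four_block_mat P Y (0\<^sub>m (I1*I2 - r) r) Pb
                                * mat_inv (state_mat I1 I2 G'))) = 1)) \<and>
         (slocc_equiv r I1 I2 G' G \<longleftrightarrow>
           (\<exists>P Pb Y. P \<in> carrier_mat r r \<and> invertible_mat P \<and>
              Pb \<in> carrier_mat (I1*I2 - r) (I1*I2 - r) \<and> invertible_mat Pb \<and>
              Y \<in> carrier_mat r (I1*I2 - r) \<and>
              (\<exists>C B. C \<in> carrier_mat I2 I2 \<and> B \<in> carrier_mat I1 I1 \<and>
                 state_mat I1 I2 G * four_block_mat P Y (0\<^sub>m (I1*I2 - r) r) Pb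
                   * mat_inv (state_mat I1 I2 G') = kron C B)))"
proof -
  \<comment> \<open>The other hypotheses are implied by the two complementary states.\<close>
  have rank_iff:
    "(P \<in> carrier_mat r r \<and> invertible_mat P \<and> Pb \<in> carrier_mat (I1*I2 - r) (I1*I2 - r) \<and>
        invertible_mat Pb \<and> Y \<in> carrier_mat r (I1*I2 - r) \<and>
        vec_space.rank (I2*I2) (realign I1 I2 (state_mat I1 I2 G * four_block_mat P Y (0\<^sub>m (I1*I2 - r) r) Pb
                                * mat_inv (state_mat I1 I2 G'))) = 1) \<longleftrightarrow>
     (P \<in> carrier_mat r r \<and> invertible_mat P \<and> Pb \<in> carrier_mat (I1*I2 - r) (I1*I2 - r) \<and>
        invertible_mat Pb \<and> Y \<in> carrier_mat r (I1*I2 - r) \<and>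
        (\<exists>C B. C \<in> carrier_mat I2 I2 \<and> B \<in> carrier_mat I1 I1 \<and>
           state_mat I1 I2 G * four_block_mat P Y (0\<^sub>m (I1*I2 - r) r) Pb
             * mat_inv (state_mat I1 I2 G') = kron C B))" for P Pb Y
    using rank_realign_block_transform_eq_1_iff[OF assms(9,10,4,2,3)] by blast
  show ?thesis
    unfolding slocc_equiv_iff_block_kron[OF assms(9,10,4,2,3)] rank_iff by (intro conjI refl)
qed

end
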